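(* Let $\mathcal{M}$ be a finite Markov decision process with state set $S$, action set $A$, transition function $P$, and a set of accepting states $B \subseteq S$. Let $\gamma_B:(0,1)\to(0,1)$ be a function of $\gamma$ satisfying $$\lim_{\gamma \to 1^-} \frac{1-\gamma}{1-\gamma_B(\gamma)} = 0.$$ For $\gamma\in(0,1)$ define $R_B(s) = 1-\gamma_B$ if $s\in B$ and $0$ otherwise, and $\Gamma_B(s) = \gamma_B$ if $s\in B$ and $\gamma$ otherwise (with $\gamma_B=\gamma_B(\gamma)$). For a path $\sigma$ let $$G_t(\sigma) = \sum_{i=0}^{\infty} R_B(\sigma[t+i]) \prod_{j=0}^{i-1} \Gamma_B(\sigma[t+j]),$$ with the empty product equal to $1$, and for a memoryless policy $\pi$ let $v^\gamma_\pi(s)$ be the expected value of $G_0(\sigma)$ over random paths of the Markov chain $\mathcal{M}_\pi$ induced by $\pi$ started at $s$. Let $B_\pi$ be the set of states $s\in B$ that belong to some bottom strongly connected component of $\mathcal{M}_\pi$. Then for every memoryless policy $\pi$ and every $s\in B_\pi$, $$\lim_{\gamma\to1^-} v^\gamma_\pi(s) = 1.$$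
   Context: A finite MDP consists of a finite state set $S$, a finite action set $A$, for each state $s$ a nonempty set $A(s)\subseteq A$ of enabled actions, and transition probabilities $P:S\times A\times S\to[0,1]$ with $\sum_{s'}P(s,a,s')=1$ for $a\in A(s)$. A memoryless policy is a map $\pi:S\to A$ with $\pi(s)\in A(s)$; it induces the Markov chain $\mathcal{M}_\pi$ on $S$ with transition probabilities $P_\pi(s,s')=P(s,\pi(s),s')$. A bottom strongly connected component (BSCC) of a Markov chain is a strongly connected component of its transition graph (edges where the transition probability is positive) with no outgoing transitions. *)

theory Defs
  imports "HOL-Probability.Probability"
begin

text \<open>Path measure of the Markov chain with transition kernel Q (a pmf for each state)
  started in state s, on the space of paths nat => 's, constructed by the
  Ionescu-Tulcea theorem: coordinate 0 is s, coordinate i+1 is drawn from Q (path i).\<close>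

definition mc_kernel :: "('s \<Rightarrow> 's pmf) \<Rightarrow> 's \<Rightarrow> nat \<Rightarrow> (nat \<Rightarrow> 's) \<Rightarrow> 's measure" where
  "mc_kernel Q s i x = (if i = 0 then return (count_space UNIV) s else measure_pmf (Q (x (i - 1))))"

definition mc_paths :: "('s \<Rightarrow> 's pmf) \<Rightarrow> 's \<Rightarrow> (nat \<Rightarrow> 's) measure" where
  "mc_paths Q s = projective_family.lim UNIV
      (Ionescu_Tulcea.CI (mc_kernel Q s) (\<lambda>_. count_space UNIV)) (\<lambda>_. count_space UNIV)"

definition induced_mc :: "('s \<Rightarrow> 'a \<Rightarrow> 's pmf) \<Rightarrow> ('s \<Rightarrow> 'a) \<Rightarrow> 's \<Rightarrow> 's pmf" where
  "induced_mc K pol s = K s (pol s)"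

definition mc_graph :: "('s \<Rightarrow> 's pmf) \<Rightarrow> ('s \<times> 's) set" where
  "mc_graph Q = {(s, t). pmf (Q s) t > 0}"

definition is_scc :: "('s \<times> 's) set \<Rightarrow> 's set \<Rightarrow> bool" where
  "is_scc E C \<longleftrightarrow> C \<noteq> {} \<and> (\<forall>x\<in>C. \<forall>y\<in>C. (x, y) \<in> E\<^sup>*)
     \<and> (\<forall>x\<in>C. \<forall>y. (x, y) \<in> E\<^sup>* \<and> (y, x) \<in> E\<^sup>* \<longrightarrow> y \<in> C)"

definition is_bscc :: "('s \<times> 's) set \<Rightarrow> 's set \<Rightarrow> bool" where
  "is_bscc E C \<longleftrightarrow> is_scc E C \<and> (\<forall>x\<in>C. \<forall>y. (x, y) \<in> E \<longrightarrow> y \<in> C)"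

definition B_pi :: "('s \<Rightarrow> 'a \<Rightarrow> 's pmf) \<Rightarrow> ('s \<Rightarrow> 'a) \<Rightarrow> 's set \<Rightarrow> 's set" where
  "B_pi K pol B = {s \<in> B. \<exists>C. is_bscc (mc_graph (induced_mc K pol)) C \<and> s \<in> C}"

definition R_B :: "'s set \<Rightarrow> real \<Rightarrow> 's \<Rightarrow> real" where
  "R_B B gB s = (if s \<in> B then 1 - gB else 0)"

definition Gamma_B :: "'s set \<Rightarrow> real \<Rightarrow> real \<Rightarrow> 's \<Rightarrow> real" where
  "Gamma_B B g gB s = (if s \<in> B then gB else g)"

definition G_ret :: "'s set \<Rightarrow> real \<Rightarrow> real \<Rightarrow> nat \<Rightarrow> (nat \<Rightarrow> 's) \<Rightarrow> real" where
  "G_ret B g gB t \<sigma> = (\<Sum>i. R_B B gB (\<sigma> (t + i)) * (\<Prod>j<i. Gamma_B B g gB (\<sigma> (t + j))))"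

definition value_fn :: "('s \<Rightarrow> 'a \<Rightarrow> 's pmf) \<Rightarrow> 's set \<Rightarrow> (real \<Rightarrow> real) \<Rightarrow> ('s \<Rightarrow> 'a) \<Rightarrow> real \<Rightarrow> 's \<Rightarrow> real" where
  "value_fn K B gammaB pol g s =
     (\<integral>\<sigma>. G_ret B g (gammaB g) 0 \<sigma> \<partial>mc_paths (induced_mc K pol) s)"

lemma mc_kernel_Ionescu_Tulcea:
  fixes Q :: "'s::countable \<Rightarrow> 's pmf"
  shows "Ionescu_Tulcea (mc_kernel Q s) (\<lambda>_. count_space UNIV)"
proof (rule Ionescu_Tulcea.intro)
  fix i :: nat
  show "mc_kernel Q s i \<in> measurable (PiM {0..<i} (\<lambda>_. count_space UNIV)) (subprob_algebra (count_space UNIV))"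
  proof (cases i)
    case 0
    have "(\<lambda>x. return (count_space UNIV) s) \<in> measurable (PiM {0..<i} (\<lambda>_. count_space UNIV)) (subprob_algebra (count_space UNIV))"
      by (rule measurable_const)
         (auto simp: space_subprob_algebra prob_space_imp_subprob_space prob_space_return)
    moreover have "mc_kernel Q s i = (\<lambda>x. return (count_space UNIV) s)"
      using 0 by (simp add: mc_kernel_def fun_eq_iff)
    ultimately show ?thesis by simp
  next
    case (Suc n)
    have m1: "(\<lambda>x. x n) \<in> measurable (PiM {0..<Suc n} (\<lambda>_. count_space UNIV)) (count_space UNIV)"
      by (rule measurable_component_singleton) simp
    have m2: "(\<lambda>y. measure_pmf (Q y)) \<in> measurable (count_space UNIV) (subprob_algebra (count_space UNIV))"
      by (subst measurable_count_space_eq1)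
         (auto simp: space_subprob_algebra subprob_space_measure_pmf)
    have "(\<lambda>x. measure_pmf (Q (x n))) \<in> measurable (PiM {0..<Suc n} (\<lambda>_. count_space UNIV)) (subprob_algebra (count_space UNIV))"
      using measurable_compose[OF m1 m2] by simp
    moreover have "mc_kernel Q s (Suc n) = (\<lambda>x. measure_pmf (Q (x n)))"
      by (simp add: mc_kernel_def fun_eq_iff)
    ultimately show ?thesis using Suc by simp
  qed
next
  show "prob_space (mc_kernel Q s i x)" for i x
    by (simp add: mc_kernel_def prob_space_return prob_space_measure_pmf)
qed

end

theory Submission
  imports Defs
begin

(* With Gm = Gamma_B, R = R_B and P the transition kernel of the induced chain, all discounts are
   at most max gamma gamma_B < 1, so the value is the convergent series v = sum_i (Gm P)^i R. It
   solves the Bellman equation v = R + Gm P v, and the maximum principle gives v <= 1. The deficit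
   w = 1 - v then satisfies w <= gamma_B P w on B and w <= (1 - gamma) + P w everywhere. Let C be the
   BSCC containing s and M the maximum of w on C. The gap M - w is at least (1 - gamma_B) M at s,
   and going backwards along an edge of C it shrinks at most by the factor q, the least positive
   transition probability, and by the additive amount 1 - gamma. A path of length k <= n = |edges|
   from a maximiser of w to s thus gives q^n (1 - gamma_B) M <= n (1 - gamma), so
   1 - v s <= M <= n / q^n * (1 - gamma) / (1 - gamma_B), which tends to 0. *)

lemma pmf_weighted_sum_le_gap:
  fixes p :: "'s::finite pmf"
  assumes le: "\<And>u. u \<in> set_pmf p \<Longrightarrow> h u \<le> b"
  shows "(\<Sum>u\<in>UNIV. pmf p u * h u) \<le> b - pmf p v * (b - h v)"
proof -
  have nonneg: "0 \<le> pmf p u * (b - h u)" for u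
    using le[of u] by (cases "u \<in> set_pmf p") (auto simp: set_pmf_iff)
  have "pmf p v * (b - h v) \<le> (\<Sum>u\<in>UNIV. pmf p u * (b - h u))"
    by (rule member_le_sum) (auto simp: nonneg)
  also have "\<dots> = b - (\<Sum>u\<in>UNIV. pmf p u * h u)"
    by (simp add: right_diff_distrib sum_subtractf sum_distrib_right[symmetric] sum_pmf_eq_1)
  finally show ?thesis by linarith
qed

lemma pmf_weighted_sum_le:
  fixes p :: "'s::finite pmf"
  assumes "\<And>u. u \<in> set_pmf p \<Longrightarrow> h u \<le> b"
  shows "(\<Sum>u\<in>UNIV. pmf p u * h u) \<le> b"
proof -
  obtain v where "v \<in> set_pmf p" using set_pmf_not_empty[of p] by blast
  then have "0 \<le> pmf p v * (b - h v)" using assms by simp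
  moreover have "(\<Sum>u\<in>UNIV. pmf p u * h u) \<le> b - pmf p v * (b - h v)"
    by (rule pmf_weighted_sum_le_gap) (rule assms)
  ultimately show ?thesis by linarith
qed

definition discounted_step :: "('s \<Rightarrow> real) \<Rightarrow> ('s \<Rightarrow> 's pmf) \<Rightarrow> ('s \<Rightarrow> real) \<Rightarrow> 's \<Rightarrow> real" where
  "discounted_step Gm Q h t = Gm t * (\<Sum>u\<in>UNIV. pmf (Q t) u * h u)"

lemma discounted_step_nonneg:
  assumes "\<And>t. 0 \<le> Gm t" "\<And>t. 0 \<le> h t"
  shows "0 \<le> discounted_step Gm Q h t"
  unfolding discounted_step_def using assms by (intro mult_nonneg_nonneg sum_nonneg) auto

lemma discounted_step_pow_Suc:
  "(discounted_step Gm Q ^^ Suc i) h t = Gm t * (\<Sum>u\<in>UNIV. pmf (Q t) u * (discounted_step Gm Q ^^ i) h u)"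
  by (simp only: funpow.simps comp_apply discounted_step_def[of Gm Q "(discounted_step Gm Q ^^ i) h" t])

lemma discounted_step_pow_bounds:
  fixes Q :: "'s::finite \<Rightarrow> 's pmf"
  assumes Gm: "\<And>t. 0 \<le> Gm t" "\<And>t. Gm t \<le> c" and h: "\<And>t. 0 \<le> h t" "\<And>t. h t \<le> b"
  shows "0 \<le> (discounted_step Gm Q ^^ i) h t \<and> (discounted_step Gm Q ^^ i) h t \<le> c ^ i * b"
proof (induction i arbitrary: t)
  case 0
  then show ?case using h by simp
next
  case (Suc i)
  let ?E = "\<Sum>u\<in>UNIV. pmf (Q t) u * (discounted_step Gm Q ^^ i) h u"
  have "?E \<le> c ^ i * b"
    using Suc by (intro pmf_weighted_sum_le) auto
  moreover have "0 \<le> ?E"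
    using Suc by (intro sum_nonneg mult_nonneg_nonneg) auto
  moreover have "0 \<le> c"
    using Gm order_trans by blast
  ultimately have "Gm t * ?E \<le> c * (c ^ i * b)"
    using Gm by (intro mult_mono) auto
  then show ?case
    unfolding discounted_step_pow_Suc using Gm \<open>0 \<le> ?E\<close> by (simp add: mult.assoc)
qed

lemma summable_discounted_step_pow:
  fixes Q :: "'s::finite \<Rightarrow> 's pmf"
  assumes "\<And>t. 0 \<le> Gm t" "\<And>t. Gm t \<le> c" "c < 1" "\<And>t. 0 \<le> h t" "\<And>t. h t \<le> b"
  shows "summable (\<lambda>i. (discounted_step Gm Q ^^ i) h t)"
proof (rule summable_comparison_test')
  have "0 \<le> c" using assms(1,2) order_trans by blast
  then show "summable (\<lambda>i. c ^ i * b)"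
    using assms(3) by (intro summable_mult2 summable_geometric) simp
  show "norm ((discounted_step Gm Q ^^ i) h t) \<le> c ^ i * b" for i
    using discounted_step_pow_bounds[OF assms(1,2,4,5), where Q=Q and i=i and t=t] by simp
qed

lemma sets_mc_paths [measurable_cong]:
  fixes Q :: "'s::countable \<Rightarrow> 's pmf"
  shows "sets (mc_paths Q s) = sets (PiM UNIV (\<lambda>_. count_space UNIV))"
proof -
  interpret Ionescu_Tulcea "mc_kernel Q s" "\<lambda>_. count_space UNIV"
    by (rule mc_kernel_Ionescu_Tulcea)
  show ?thesis by (simp add: mc_paths_def)
qed

context Ionescu_Tulcea
begin

lemma up_to_atLeastLessThan: "up_to {0..<n} = n"
  using up_to_iff_Ico[of "{0..<n}" n] up_to[of "{0..<n}"] by (auto intro: antisym)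

lemma nn_integral_lim_initial_segment:
  assumes [measurable]: "f \<in> borel_measurable (PiM {0..<n} M)"
  shows "(\<integral>\<^sup>+\<sigma>. f (restrict \<sigma> {0..<n}) \<partial>PF.lim) = (\<integral>\<^sup>+x. f x \<partial>C 0 n (\<lambda>_. undefined))"
proof -
  have undef: "(\<lambda>_. undefined) \<in> space (PiM {0..<0} M)"
    by (simp add: space_PiM)
  have restrict_lim: "(\<lambda>\<sigma>. restrict \<sigma> {0..<n}) \<in> measurable PF.lim (PiM {0..<n} M)"
    by (simp add: measurable_cong_sets[OF PF.sets_lim refl] measurable_restrict_subset)
  have "(\<integral>\<^sup>+\<sigma>. f (restrict \<sigma> {0..<n}) \<partial>PF.lim)
      = (\<integral>\<^sup>+x. f x \<partial>distr PF.lim (PiM {0..<n} M) (\<lambda>\<sigma>. restrict \<sigma> {0..<n}))"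
    by (rule nn_integral_distr[symmetric, OF restrict_lim]) simp
  also have "\<dots> = (\<integral>\<^sup>+x. f x \<partial>CI {0..<n})"
    by (simp add: distr_lim)
  also have "\<dots> = (\<integral>\<^sup>+x. f (restrict x {0..<n}) \<partial>C 0 n (\<lambda>_. undefined))"
    unfolding CI_def up_to_atLeastLessThan
    by (rule nn_integral_distr)
      (simp_all add: measurable_cong_sets[OF sets_C[OF undef] refl] measurable_restrict_subset)
  also have "\<dots> = (\<integral>\<^sup>+x. f x \<partial>C 0 n (\<lambda>_. undefined))"
    by (intro nn_integral_cong) (simp add: space_C[OF undef] space_PiM PiE_restrict)
  finally show ?thesis .
qed

end

lemma nn_integral_eP_mc_kernel_discounted:
  fixes Q :: "'s::finite \<Rightarrow> 's pmf"
  assumes x: "x \<in> space (PiM {0..<Suc i} (\<lambda>_. count_space UNIV))"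
    and Gm: "\<And>t. 0 \<le> Gm t" and h: "\<And>t. 0 \<le> h t"
  shows "(\<integral>\<^sup>+y. ennreal ((\<Prod>j<Suc i. Gm (y j)) * h (y (Suc i)))
      \<partial>Ionescu_Tulcea.eP (mc_kernel Q s) (\<lambda>_. count_space UNIV) (Suc i) x)
    = ennreal ((\<Prod>j<i. Gm (x j)) * discounted_step Gm Q h (x i))"
proof -
  interpret Ionescu_Tulcea "mc_kernel Q s" "\<lambda>_. count_space UNIV"
    by (rule mc_kernel_Ionescu_Tulcea)
  have "(\<integral>\<^sup>+y. ennreal ((\<Prod>j<Suc i. Gm (y j)) * h (y (Suc i))) \<partial>eP (Suc i) x)
      = (\<integral>\<^sup>+u. ennreal ((\<Prod>j<Suc i. Gm (x j)) * h u) \<partial>measure_pmf (Q (x i)))"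
    by (subst nn_integral_eP[OF x]) (simp_all add: mc_kernel_def)
  also have "\<dots> = (\<Sum>u\<in>UNIV. ennreal ((\<Prod>j<Suc i. Gm (x j)) * h u) * pmf (Q (x i)) u)"
    by (rule nn_integral_measure_pmf_support) auto
  also have "\<dots> = ennreal (\<Sum>u\<in>UNIV. (\<Prod>j<Suc i. Gm (x j)) * h u * pmf (Q (x i)) u)"
    by (subst sum_ennreal[symmetric])
      (auto intro!: mult_nonneg_nonneg prod_nonneg Gm h simp: ennreal_mult'')
  also have "\<dots> = ennreal ((\<Prod>j<i. Gm (x j)) * discounted_step Gm Q h (x i))"
    by (simp add: discounted_step_def sum_distrib_left algebra_simps)
  finally show ?thesis .
qed

lemma nn_integral_C_mc_kernel_discounted:
  fixes Q :: "'s::finite \<Rightarrow> 's pmf"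
  assumes Gm: "\<And>t. 0 \<le> Gm t" and h: "\<And>t. 0 \<le> h t"
  shows "(\<integral>\<^sup>+x. ennreal ((\<Prod>j<i. Gm (x j)) * h (x i))
      \<partial>Ionescu_Tulcea.C (mc_kernel Q s) (\<lambda>_. count_space UNIV) 0 (Suc i) (\<lambda>_. undefined))
    = ennreal ((discounted_step Gm Q ^^ i) h s)"
proof -
  interpret Ionescu_Tulcea "mc_kernel Q s" "\<lambda>_. count_space UNIV"
    by (rule mc_kernel_Ionescu_Tulcea)
  let ?S = "\<lambda>_::nat. count_space (UNIV :: 's set)"
  have undef: "(\<lambda>_. undefined) \<in> space (PiM {0..<0} ?S)"
    by (simp add: space_PiM)
  show ?thesis
    using h
  proof (induction i arbitrary: h)
    case (0 h)
    have "C 0 (Suc 0) (\<lambda>_. undefined) = eP 0 (\<lambda>_. undefined)"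
      using bind_return[OF measurable_eP undef] by simp
    moreover have "(\<integral>\<^sup>+x. ennreal (h (x 0)) \<partial>eP 0 (\<lambda>_. undefined)) = ennreal (h s)"
      by (subst nn_integral_eP[OF undef]) (simp_all add: mc_kernel_def nn_integral_return)
    ultimately show ?case by simp
  next
    case (Suc i h)
    let ?f = "\<lambda>y. ennreal ((\<Prod>j<Suc i. Gm (y j)) * h (y (Suc i)))"
    have C_Suc: "C 0 (Suc (Suc i)) (\<lambda>_. undefined) = C 0 (Suc i) (\<lambda>_. undefined) \<bind> eP (Suc i)"
      by simp
    have "(\<integral>\<^sup>+y. ?f y \<partial>C 0 (Suc (Suc i)) (\<lambda>_. undefined))
        = (\<integral>\<^sup>+x. (\<integral>\<^sup>+y. ?f y \<partial>eP (Suc i) x) \<partial>C 0 (Suc i) (\<lambda>_. undefined))"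
      unfolding C_Suc
    proof (rule nn_integral_bind)
      show "?f \<in> borel_measurable (PiM {0..<Suc (Suc i)} ?S)"
        by measurable
      show "eP (Suc i) \<in> measurable (C 0 (Suc i) (\<lambda>_. undefined)) (subprob_algebra (PiM {0..<Suc (Suc i)} ?S))"
        by (subst measurable_cong_sets[OF sets_C[OF undef] refl]) (simp add: measurable_eP)
    qed
    also have "\<dots> = (\<integral>\<^sup>+x. ennreal ((\<Prod>j<i. Gm (x j)) * discounted_step Gm Q h (x i))
        \<partial>C 0 (Suc i) (\<lambda>_. undefined))"
      by (intro nn_integral_cong nn_integral_eP_mc_kernel_discounted Gm Suc.prems)
        (simp add: space_C[OF undef] del: C.simps)
    also have "\<dots> = ennreal ((discounted_step Gm Q ^^ i) (discounted_step Gm Q h) s)"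
      by (intro Suc.IH discounted_step_nonneg Gm Suc.prems)
    finally show ?case
      by (simp only: funpow_Suc_right comp_def)
  qed
qed

lemma nn_integral_mc_paths_discounted:
  fixes Q :: "'s::finite \<Rightarrow> 's pmf"
  assumes "\<And>t. 0 \<le> Gm t" "\<And>t. 0 \<le> h t"
  shows "(\<integral>\<^sup>+\<sigma>. ennreal ((\<Prod>j<i. Gm (\<sigma> j)) * h (\<sigma> i)) \<partial>mc_paths Q s)
    = ennreal ((discounted_step Gm Q ^^ i) h s)"
proof -
  interpret Ionescu_Tulcea "mc_kernel Q s" "\<lambda>_. count_space UNIV"
    by (rule mc_kernel_Ionescu_Tulcea)
  define f where "f x = ennreal ((\<Prod>j<i. Gm (x j)) * h (x i))" for x :: "nat \<Rightarrow> 's"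
  have "(\<integral>\<^sup>+\<sigma>. f \<sigma> \<partial>mc_paths Q s) = (\<integral>\<^sup>+\<sigma>. f (restrict \<sigma> {0..<Suc i}) \<partial>PF.lim)"
    by (simp add: mc_paths_def f_def)
  also have "\<dots> = (\<integral>\<^sup>+x. f x \<partial>C 0 (Suc i) (\<lambda>_. undefined))"
    by (rule nn_integral_lim_initial_segment) (simp add: f_def)
  also have "\<dots> = ennreal ((discounted_step Gm Q ^^ i) h s)"
    unfolding f_def by (rule nn_integral_C_mc_kernel_discounted[OF assms])
  finally show ?thesis by (simp add: f_def)
qed

lemma integral_mc_paths_discounted_sum:
  fixes Q :: "'s::finite \<Rightarrow> 's pmf"
  assumes Gm: "\<And>t. 0 \<le> Gm t" "\<And>t. Gm t \<le> c" and c: "c < 1"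
    and R: "\<And>t. 0 \<le> R t" "\<And>t. R t \<le> 1"
  shows "(\<integral>\<sigma>. (\<Sum>i. R (\<sigma> i) * (\<Prod>j<i. Gm (\<sigma> j))) \<partial>mc_paths Q s)
    = (\<Sum>i. (discounted_step Gm Q ^^ i) R s)"
proof -
  define f where "f i \<sigma> = R (\<sigma> i) * (\<Prod>j<i. Gm (\<sigma> j))" for i and \<sigma> :: "nat \<Rightarrow> 's"
  define a where "a i = (discounted_step Gm Q ^^ i) R s" for i
  have f_nonneg: "0 \<le> f i \<sigma>" for i \<sigma>
    unfolding f_def by (intro mult_nonneg_nonneg prod_nonneg R Gm)
  have f_le: "f i \<sigma> \<le> c ^ i" for i \<sigma>
  proof -
    have "(\<Prod>j<i. Gm (\<sigma> j)) \<le> c ^ i"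
      using prod_mono[of "{..<i}" "\<lambda>j. Gm (\<sigma> j)" "\<lambda>_. c"] Gm by simp
    moreover have "R (\<sigma> i) * (\<Prod>j<i. Gm (\<sigma> j)) \<le> 1 * (\<Prod>j<i. Gm (\<sigma> j))"
      by (intro mult_right_mono R prod_nonneg Gm)
    ultimately show ?thesis
      unfolding f_def by linarith
  qed
  have "0 \<le> c"
    using Gm order_trans by blast
  then have "summable (\<lambda>i. c ^ i)"
    using c by simp
  then have f_summable: "summable (\<lambda>i. f i \<sigma>)" for \<sigma>
    by (rule summable_comparison_test') (simp add: f_nonneg f_le)
  have "f i \<in> borel_measurable (PiM UNIV (\<lambda>_. count_space UNIV))" for i
    unfolding f_def by measurable
  then have f_measurable [measurable]: "f i \<in> borel_measurable (mc_paths Q s)" for i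
    by (simp add: measurable_cong_sets[OF sets_mc_paths refl])
  have a_nonneg: "0 \<le> a i" for i
    using discounted_step_pow_bounds[OF Gm R, where Q=Q and i=i and t=s] by (simp add: a_def)
  have a_summable: "summable a"
    unfolding a_def by (rule summable_discounted_step_pow[OF Gm c R])
  have "(\<integral>\<sigma>. (\<Sum>i. f i \<sigma>) \<partial>mc_paths Q s) = enn2real (\<integral>\<^sup>+\<sigma>. ennreal (\<Sum>i. f i \<sigma>) \<partial>mc_paths Q s)"
    by (rule integral_eq_nn_integral) (auto intro!: suminf_nonneg f_summable f_nonneg)
  also have "\<dots> = enn2real (\<integral>\<^sup>+\<sigma>. (\<Sum>i. ennreal (f i \<sigma>)) \<partial>mc_paths Q s)"
    by (simp add: suminf_ennreal2[OF f_nonneg f_summable])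
  also have "\<dots> = enn2real (\<Sum>i. \<integral>\<^sup>+\<sigma>. ennreal (f i \<sigma>) \<partial>mc_paths Q s)"
    by (subst nn_integral_suminf) auto
  also have "\<dots> = enn2real (\<Sum>i. ennreal (a i))"
    unfolding f_def a_def mult.commute[of "R _"]
    by (simp add: nn_integral_mc_paths_discounted Gm R)
  also have "\<dots> = (\<Sum>i. a i)"
    by (simp add: suminf_ennreal2[OF a_nonneg a_summable] suminf_nonneg[OF a_summable a_nonneg])
  finally show ?thesis
    unfolding f_def a_def .
qed

lemma discounted_step_series_bellman:
  fixes Q :: "'s::finite \<Rightarrow> 's pmf"
  assumes Gm: "\<And>t. 0 \<le> Gm t" "\<And>t. Gm t \<le> c" and c: "c < 1"
    and R: "\<And>t. 0 \<le> R t" "\<And>t. R t \<le> 1"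
  defines "v \<equiv> \<lambda>t. \<Sum>i. (discounted_step Gm Q ^^ i) R t"
  shows "v t = R t + Gm t * (\<Sum>u\<in>UNIV. pmf (Q t) u * v u)"
proof -
  define a where "a i u = (discounted_step Gm Q ^^ i) R u" for i u
  have a_summable: "summable (\<lambda>i. a i u)" for u
    unfolding a_def by (rule summable_discounted_step_pow[OF Gm c R])
  have "(\<Sum>i. a i t) = a 0 t + (\<Sum>i. a (Suc i) t)"
    using suminf_split_head[OF a_summable] by simp
  also have "(\<Sum>i. a (Suc i) t) = Gm t * (\<Sum>i. \<Sum>u\<in>UNIV. pmf (Q t) u * a i u)"
    unfolding a_def discounted_step_pow_Suc
    by (intro suminf_mult summable_sum summable_mult a_summable[unfolded a_def])
  also have "(\<Sum>i. \<Sum>u\<in>UNIV. pmf (Q t) u * a i u) = (\<Sum>u\<in>UNIV. \<Sum>i. pmf (Q t) u * a i u)"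
    by (rule suminf_sum) (intro summable_mult a_summable)
  also have "\<dots> = (\<Sum>u\<in>UNIV. pmf (Q t) u * (\<Sum>i. a i u))"
    by (intro sum.cong refl suminf_mult a_summable)
  finally show ?thesis
    unfolding v_def a_def by simp
qed

lemma bellman_solution_le_1:
  fixes Q :: "'s::finite \<Rightarrow> 's pmf"
  assumes bellman: "\<And>t. v t = R t + Gm t * (\<Sum>u\<in>UNIV. pmf (Q t) u * v u)"
    and Gm: "\<And>t. 0 \<le> Gm t" "\<And>t. Gm t < 1" and R_Gm: "\<And>t. R t + Gm t \<le> 1"
  shows "v t \<le> 1"
proof (rule ccontr)
  assume "\<not> v t \<le> 1"
  define m where "m = Max (range v)"
  have v_le_m: "v u \<le> m" for u
    unfolding m_def by (rule Max_ge) auto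
  have "m \<in> range v"
    unfolding m_def by (rule Max_in) auto
  then obtain t0 where t0: "v t0 = m"
    by auto
  have "1 < m"
    using v_le_m[of t] \<open>\<not> v t \<le> 1\<close> by linarith
  have "(\<Sum>u\<in>UNIV. pmf (Q t0) u * v u) \<le> m"
    by (rule pmf_weighted_sum_le) (rule v_le_m)
  then have "Gm t0 * (\<Sum>u\<in>UNIV. pmf (Q t0) u * v u) \<le> Gm t0 * m"
    by (rule mult_left_mono) (rule Gm(1))
  then have "m \<le> R t0 + Gm t0 * m"
    using bellman[of t0] t0 by linarith
  also have "\<dots> \<le> (1 - Gm t0) + Gm t0 * m"
    using R_Gm[of t0] by linarith
  also have "\<dots> < m"
    using mult_strict_left_mono[OF \<open>1 < m\<close>, of "1 - Gm t0"] Gm(2)[of t0] by (simp add: algebra_simps)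
  finally show False by simp
qed

definition min_trans_prob :: "('s \<Rightarrow> 's pmf) \<Rightarrow> real" where
  "min_trans_prob Q = Min (insert 1 ((\<lambda>(t, u). pmf (Q t) u) ` mc_graph Q))"

lemma min_trans_prob_pos: "0 < min_trans_prob (Q :: 's::finite \<Rightarrow> 's pmf)"
  unfolding min_trans_prob_def by (subst Min_gr_iff) (auto simp: mc_graph_def)

lemma min_trans_prob_le_1: "min_trans_prob (Q :: 's::finite \<Rightarrow> 's pmf) \<le> 1"
  unfolding min_trans_prob_def by (intro Min_le) auto

lemma min_trans_prob_le:
  fixes Q :: "'s::finite \<Rightarrow> 's pmf"
  assumes "(t, u) \<in> mc_graph Q"
  shows "min_trans_prob Q \<le> pmf (Q t) u"
  unfolding min_trans_prob_def using assms by (intro Min_le) (auto intro: rev_image_eqI)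

lemma in_mc_graph_iff: "(t, u) \<in> mc_graph Q \<longleftrightarrow> u \<in> set_pmf (Q t)"
  by (simp add: mc_graph_def pmf_positive_iff)

lemma is_bscc_closed: "is_bscc E C \<Longrightarrow> x \<in> C \<Longrightarrow> (x, y) \<in> E \<Longrightarrow> y \<in> C"
  unfolding is_bscc_def by blast

lemma is_bscc_relpow_path:
  assumes "is_bscc E C" "finite E" "x \<in> C" "y \<in> C"
  obtains k where "k \<le> card E" "(x, y) \<in> E ^^ k"
proof -
  have "(x, y) \<in> E\<^sup>*"
    using assms unfolding is_bscc_def is_scc_def by blast
  then show ?thesis
    using that rtrancl_finite_eq_relpow[OF assms(2)] by auto
qed

lemma relpow_decay_lower_bound:
  assumes closed: "\<And>t u. t \<in> C \<Longrightarrow> (t, u) \<in> E \<Longrightarrow> u \<in> C"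
    and decay: "\<And>t u. t \<in> C \<Longrightarrow> (t, u) \<in> E \<Longrightarrow> q * d u - \<epsilon> \<le> d t"
    and q: "0 \<le> q" "q \<le> 1" and \<epsilon>: "0 \<le> \<epsilon>"
  shows "t \<in> C \<Longrightarrow> (t, s) \<in> E ^^ k \<Longrightarrow> q ^ k * d s - real k * \<epsilon> \<le> d t"
proof (induction k arbitrary: t)
  case 0
  then show ?case by simp
next
  case (Suc k)
  obtain u where tu: "(t, u) \<in> E" and us: "(u, s) \<in> E ^^ k"
    using relpow_Suc_D2[OF Suc.prems(2)] by blast
  have "q * (real k * \<epsilon>) \<le> real k * \<epsilon>"
    using q \<epsilon> by (simp add: mult_left_le_one_le)
  then have "q ^ Suc k * d s - real (Suc k) * \<epsilon> \<le> q * (q ^ k * d s - real k * \<epsilon>) - \<epsilon>"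
    by (simp add: algebra_simps)
  also have "\<dots> \<le> q * d u - \<epsilon>"
    using Suc.IH[OF closed[OF Suc.prems(1) tu] us] q by (simp add: mult_left_mono)
  also have "\<dots> \<le> d t"
    using decay[OF Suc.prems(1) tu] .
  finally show ?case .
qed

lemma bscc_deficit_le:
  fixes Q :: "'s::finite \<Rightarrow> 's pmf" and w :: "'s \<Rightarrow> real"
  assumes w_nonneg: "\<And>t. 0 \<le> w t"
    and w_le: "\<And>t. w t \<le> \<epsilon> + (\<Sum>u\<in>UNIV. pmf (Q t) u * w u)"
    and w_le_B: "\<And>t. t \<in> B \<Longrightarrow> w t \<le> \<beta> * (\<Sum>u\<in>UNIV. pmf (Q t) u * w u)"
    and \<epsilon>: "0 \<le> \<epsilon>" and \<beta>: "0 \<le> \<beta>" "\<beta> < 1"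
    and bscc: "is_bscc (mc_graph Q) C" and s: "s \<in> C" "s \<in> B"
  defines "n \<equiv> card (mc_graph Q)" and "q \<equiv> min_trans_prob Q"
  shows "w s \<le> real n * \<epsilon> / (q ^ n * (1 - \<beta>))"
proof -
  let ?Ew = "\<lambda>t. \<Sum>u\<in>UNIV. pmf (Q t) u * w u"
  have closed: "u \<in> C" if "t \<in> C" "(t, u) \<in> mc_graph Q" for t u
    using bscc that by (rule is_bscc_closed)
  define M where "M = Max (w ` C)"
  have w_le_M: "w u \<le> M" if "u \<in> C" for u
    unfolding M_def using that by (intro Max_ge) auto
  have "M \<in> w ` C"
    unfolding M_def using s by (intro Max_in) auto
  then obtain t_max where t_max: "t_max \<in> C" "w t_max = M"
    by auto
  have Ew_le: "?Ew t \<le> M - pmf (Q t) u * (M - w u)" if "t \<in> C" for t u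
    using closed[OF that] w_le_M by (intro pmf_weighted_sum_le_gap) (simp add: in_mc_graph_iff)
  have gap_step: "q * (M - w u) - \<epsilon> \<le> M - w t" if "t \<in> C" "(t, u) \<in> mc_graph Q" for t u
  proof -
    have "q * (M - w u) \<le> pmf (Q t) u * (M - w u)"
      using min_trans_prob_le[OF that(2)] w_le_M[OF closed[OF that]]
      by (intro mult_right_mono) (simp_all add: q_def)
    then show ?thesis
      using Ew_le[OF that(1), of u] w_le[of t] by linarith
  qed
  have "?Ew s \<le> M"
    using closed[OF s(1)] w_le_M by (intro pmf_weighted_sum_le) (simp add: in_mc_graph_iff)
  then have gap_target: "(1 - \<beta>) * M \<le> M - w s"
    using w_le_B[OF s(2)] mult_left_mono[OF _ \<beta>(1)] by (fastforce simp: algebra_simps)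
  obtain k where k: "k \<le> n" "(t_max, s) \<in> mc_graph Q ^^ k"
    using is_bscc_relpow_path[OF bscc _ t_max(1) s(1)] by (auto simp: n_def)
  have q: "0 < q" "q \<le> 1"
    unfolding q_def by (rule min_trans_prob_pos, rule min_trans_prob_le_1)
  have "q ^ n * ((1 - \<beta>) * M) \<le> q ^ k * ((1 - \<beta>) * M)"
    using q k(1) \<beta> w_nonneg[of s] w_le_M[OF s(1)]
    by (intro mult_right_mono power_decreasing) simp_all
  also have "\<dots> \<le> q ^ k * (M - w s)"
    using q gap_target by (intro mult_left_mono) simp_all
  also have "\<dots> \<le> real k * \<epsilon>"
  proof -
    have "q ^ k * (M - w s) - real k * \<epsilon> \<le> M - w t_max"
      using closed gap_step q \<epsilon> t_max(1) k(2)
      by (intro relpow_decay_lower_bound[where E = "mc_graph Q" and d = "\<lambda>t. M - w t"]) auto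
    then show ?thesis
      using t_max(2) by simp
  qed
  also have "\<dots> \<le> real n * \<epsilon>"
    using k(1) \<epsilon> by (simp add: mult_right_mono)
  finally have "M \<le> real n * \<epsilon> / (q ^ n * (1 - \<beta>))"
    using q \<beta> by (simp add: pos_le_divide_eq algebra_simps)
  then show ?thesis
    using w_le_M[OF s(1)] by linarith
qed

lemma bellman_deficit_le:
  fixes Q :: "'s::finite \<Rightarrow> 's pmf"
  assumes bellman: "\<And>t. v t = R_B B gB t + Gamma_B B g gB t * (\<Sum>u\<in>UNIV. pmf (Q t) u * v u)"
    and v_le_1: "\<And>t. v t \<le> 1" and g: "0 \<le> g" "g \<le> 1" and gB: "0 \<le> gB" "gB \<le> 1"
  shows "1 - v t \<le> (1 - g) + (\<Sum>u\<in>UNIV. pmf (Q t) u * (1 - v u))"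
    and "t \<in> B \<Longrightarrow> 1 - v t \<le> gB * (\<Sum>u\<in>UNIV. pmf (Q t) u * (1 - v u))"
proof -
  let ?Ew = "\<Sum>u\<in>UNIV. pmf (Q t) u * (1 - v u)"
  have Ew: "?Ew = 1 - (\<Sum>u\<in>UNIV. pmf (Q t) u * v u)"
    by (simp add: right_diff_distrib sum_subtractf sum_pmf_eq_1)
  have "0 \<le> ?Ew"
    using v_le_1 by (intro sum_nonneg mult_nonneg_nonneg) simp_all
  then have "g * ?Ew \<le> ?Ew" and "gB * ?Ew \<le> ?Ew"
    using g gB by (auto intro: mult_left_le_one_le)
  moreover have "1 - v t = (if t \<in> B then gB * ?Ew else (1 - g) + g * ?Ew)"
    using bellman[of t] unfolding Ew by (simp add: R_B_def Gamma_B_def algebra_simps)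
  ultimately show "1 - v t \<le> (1 - g) + ?Ew" and "t \<in> B \<Longrightarrow> 1 - v t \<le> gB * ?Ew"
    using g by (simp_all split: if_splits)
qed

lemma value_fn_deficit_bounds:
  fixes K :: "'s::finite \<Rightarrow> 'a \<Rightarrow> 's pmf"
  assumes g: "0 < g" "g < 1" and gB: "0 < gammaB g" "gammaB g < 1"
    and bscc: "is_bscc (mc_graph (induced_mc K pol)) C" and s: "s \<in> C" "s \<in> B"
  defines "Q \<equiv> induced_mc K pol"
  shows "0 \<le> 1 - value_fn K B gammaB pol g s \<and>
    1 - value_fn K B gammaB pol g s
      \<le> real (card (mc_graph Q)) / min_trans_prob Q ^ card (mc_graph Q) * ((1 - g) / (1 - gammaB g))"
proof -
  define gB where "gB = gammaB g"
  define Gm where "Gm = Gamma_B B g gB"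
  define R where "R = R_B B gB"
  have Gm: "0 \<le> Gm t" "Gm t \<le> max g gB" for t
    using g gB by (simp_all add: Gm_def gB_def Gamma_B_def)
  have R: "0 \<le> R t" "R t \<le> 1" for t
    using gB by (simp_all add: R_def gB_def R_B_def)
  have c: "max g gB < 1"
    using g gB by (simp add: gB_def)
  define v where "v t = (\<Sum>i. (discounted_step Gm Q ^^ i) R t)" for t
  have value_eq: "value_fn K B gammaB pol g s = v s"
    using integral_mc_paths_discounted_sum[OF Gm c R, of Q s]
    by (simp add: value_fn_def G_ret_def v_def Q_def Gm_def R_def gB_def)
  have bellman: "v t = R t + Gm t * (\<Sum>u\<in>UNIV. pmf (Q t) u * v u)" for t
    unfolding v_def by (rule discounted_step_series_bellman[OF Gm c R])
  have v_le_1: "v t \<le> 1" for t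
    by (rule bellman_solution_le_1[OF bellman])
      (use g gB in \<open>auto simp: Gm_def R_def gB_def Gamma_B_def R_B_def\<close>)
  note deficit = bellman_deficit_le[OF bellman[unfolded Gm_def R_def] v_le_1]
  have "1 - v s \<le> real (card (mc_graph Q)) * (1 - g) / (min_trans_prob Q ^ card (mc_graph Q) * (1 - gB))"
    by (rule bscc_deficit_le[OF _ deficit(1) deficit(2) _ _ _ bscc[folded Q_def] s])
      (use v_le_1 g gB in \<open>simp_all add: gB_def\<close>)
  then show ?thesis
    using v_le_1[of s] by (simp add: value_eq gB_def)
qed

theorem lemma3:
  fixes K :: "'s::finite \<Rightarrow> 'a::finite \<Rightarrow> 's pmf"
    and enabled :: "'s \<Rightarrow> 'a set"
    and B :: "'s set"
    and gammaB :: "real \<Rightarrow> real"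
    and pol :: "'s \<Rightarrow> 'a"
    and s :: 's
  assumes enabled_nonempty: "\<And>t. enabled t \<noteq> {}"
    and gammaB_range: "\<And>g. 0 < g \<Longrightarrow> g < 1 \<Longrightarrow> 0 < gammaB g \<and> gammaB g < 1"
    and gammaB_lim: "((\<lambda>g. (1 - g) / (1 - gammaB g)) \<longlongrightarrow> 0) (at_left 1)"
    and pi_policy: "\<And>t. pol t \<in> enabled t"
    and s_in: "s \<in> B_pi K pol B"
  shows "((\<lambda>g. value_fn K B gammaB pol g s) \<longlongrightarrow> 1) (at_left 1)"
proof -
  define Q where "Q = induced_mc K pol"
  define c where "c = real (card (mc_graph Q)) / min_trans_prob Q ^ card (mc_graph Q)"
  obtain C where bscc: "is_bscc (mc_graph Q) C" and s: "s \<in> C" "s \<in> B"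
    using s_in by (auto simp: B_pi_def Q_def)
  have "\<forall>\<^sub>F g in at_left 1. 0 < g \<and> g < (1::real)"
    using eventually_at_left_real[of 0 1] by simp
  then have bounds: "\<forall>\<^sub>F g in at_left 1. 0 \<le> 1 - value_fn K B gammaB pol g s \<and>
      1 - value_fn K B gammaB pol g s \<le> c * ((1 - g) / (1 - gammaB g))"
    by (rule eventually_mono)
      (use value_fn_deficit_bounds[OF _ _ _ _ bscc[unfolded Q_def] s] gammaB_range in \<open>auto simp: c_def Q_def\<close>)
  have "((\<lambda>g. 1 - value_fn K B gammaB pol g s) \<longlongrightarrow> 0) (at_left 1)"
    by (rule tendsto_sandwich[OF _ _ tendsto_const tendsto_mult_right_zero[OF gammaB_lim]])
      (use bounds in \<open>auto elim: eventually_mono\<close>)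
  then have "((\<lambda>g. 1 - (1 - value_fn K B gammaB pol g s)) \<longlongrightarrow> 1 - 0) (at_left 1)"
    by (intro tendsto_diff tendsto_const)
  then show ?thesis
    by simp
qed

end
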